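(* Let $F$ be a free group of rank at least $2$, and let $K_1,\dots,K_n$ be finitely generated subgroups of infinite index in $F$. Then there exists a subgroup $H\le F$ isomorphic to the free group $F_2$ of rank $2$ such that no nontrivial element of $H$ is conjugate in $F$ to an element of $K_1\cup\dots\cup K_n$. Moreover, $H$ can be chosen to be, in addition, malnormal in $F$.
   Context: A subgroup $H\le F$ is \emph{malnormal} if $gHg^{-1}\cap H=1$ for every $g\in F\setminus H$. *)

theory Defs
  imports "HOL-Algebra.Algebra"
begin

text \<open>Words over an alphabet B with signs: (x, True) stands for x, (x, False) for x inverse.\<close>

definition word_eval :: "('a, 'b) monoid_scheme \<Rightarrow> ('a \<times> bool) list \<Rightarrow> 'a" where
  "word_eval G w = foldr (\<lambda>(x, s) acc. (if s then x else inv\<^bsub>G\<^esub> x) \<otimes>\<^bsub>G\<^esub> acc) w \<one>\<^bsub>G\<^esub>"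

definition reduced_word :: "('a \<times> bool) list \<Rightarrow> bool" where
  "reduced_word w = successively (\<lambda>(x, s) (y, t). \<not> (x = y \<and> s \<noteq> t)) w"

definition free_basis :: "('a, 'b) monoid_scheme \<Rightarrow> 'a set \<Rightarrow> bool" where
  "free_basis G B \<longleftrightarrow> B \<subseteq> carrier G \<and> generate G B = carrier G \<and>
     (\<forall>w. set (map fst w) \<subseteq> B \<and> w \<noteq> [] \<and> reduced_word w \<longrightarrow> word_eval G w \<noteq> one G)"

definition free_group_rank_ge_2 :: "('a, 'b) monoid_scheme \<Rightarrow> bool" where
  "free_group_rank_ge_2 G \<longleftrightarrow> group G \<and> (\<exists>B. free_basis G B \<and> (infinite B \<or> card B \<ge> 2))"

definition free_rank_2_subgroup :: "('a, 'b) monoid_scheme \<Rightarrow> 'a set \<Rightarrow> bool" where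
  "free_rank_2_subgroup G H \<longleftrightarrow> subgroup H G \<and>
     (\<exists>a b. a \<noteq> b \<and> free_basis (G\<lparr>carrier := H\<rparr>) {a, b})"

definition finitely_generated_subgroup :: "('a, 'b) monoid_scheme \<Rightarrow> 'a set \<Rightarrow> bool" where
  "finitely_generated_subgroup G K \<longleftrightarrow>
     (\<exists>S. finite S \<and> S \<subseteq> carrier G \<and> K = generate G S)"

definition malnormal :: "('a, 'b) monoid_scheme \<Rightarrow> 'a set \<Rightarrow> bool" where
  "malnormal G H \<longleftrightarrow>
     (\<forall>g \<in> carrier G - H. {g \<otimes>\<^bsub>G\<^esub> h \<otimes>\<^bsub>G\<^esub> inv\<^bsub>G\<^esub> g | h. h \<in> H} \<inter> H = {\<one>\<^bsub>G\<^esub>})"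

end

theory Submission
  imports Defs
begin

text \<open>Fix basis elements \<open>a \<noteq> b\<close> and a reduced word \<open>u\<close>, and build reduced words
  \<open>X = c\<^sup>N d S d c\<^sup>N\<close> and \<open>Y\<close> of the same shape whose cores \<open>S\<close> contain \<open>u\<close> and
  \<open>u\<inverse>\<close>. For \<open>N\<close> large these framed words and their inverses form a comma-free code, so
  replacing the letters of a reduced word in \<open>x = X\<close>, \<open>y = Y\<close> by blocks yields a reduced
  word over the basis: \<open>H = \<langle>x, y\<rangle>\<close> is free on \<open>x, y\<close>, and normal forms of elements of
  \<open>H\<close> are concatenations of blocks. For nontrivial \<open>h \<in> H\<close> and any \<open>g\<close>, a high power
  of \<open>g h g\<inverse>\<close> shows a full block in its normal form after a prefix in \<open>gH\<close>; if
  \<open>g h g\<inverse> \<in> H\<close>, comma-freeness aligns that block with the block decomposition, so the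
  prefix lies in \<open>H\<close> and \<open>g \<in> H\<close>. Hence \<open>H\<close> is malnormal.

  Since \<open>K\<^sub>i\<close> is finitely generated, prefixes of normal forms of elements of \<open>K\<^sub>i\<close> lie
  in \<open>K\<^sub>i Q\<^sub>i\<close> for a finite set \<open>Q\<^sub>i\<close> (the vertices of the Stallings graph). Since
  \<open>K\<^sub>i\<close> has infinite index, from every point some reduced extension leaves \<open>K\<^sub>i Q\<^sub>i\<close>;
  otherwise a power of a basis letter would be conjugate into \<open>K\<^sub>i\<close> and \<open>K\<^sub>i Q\<^sub>i\<close>
  would be all of \<open>F\<close>. Concatenating such extensions yields a \<open>u\<close> that cannot occur in
  the normal form of an element of any \<open>K\<^sub>i\<close>, while it occurs in the normal form of a
  power of every conjugate of every nontrivial element of \<open>H\<close>.\<close>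

section \<open>Words and free reduction\<close>

definition inv_letter :: "'a \<times> bool \<Rightarrow> 'a \<times> bool" where
  "inv_letter l = (fst l, \<not> snd l)"

definition inv_word :: "('a \<times> bool) list \<Rightarrow> ('a \<times> bool) list" where
  "inv_word w = rev (map inv_letter w)"

definition word_over :: "'a set \<Rightarrow> ('a \<times> bool) list \<Rightarrow> bool" where
  "word_over A w \<longleftrightarrow> fst ` set w \<subseteq> A"

definition letter_eval :: "('a, 'b) monoid_scheme \<Rightarrow> 'a \<times> bool \<Rightarrow> 'a" where
  "letter_eval G l = (if snd l then fst l else inv\<^bsub>G\<^esub> fst l)"

lemma append_eq_append_split:
  assumes "xs @ ys = zs @ ts" and "length xs \<le> length zs"
  shows "\<exists>m. zs = xs @ m \<and> ys = m @ ts"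
  using assms by (auto simp: append_eq_append_conv2)

lemma append_eq_append_within:
  assumes eq: "p @ m @ s = x @ b @ y" and "length p \<le> length x" and "length s \<le> length y"
  shows "\<exists>m1 m2. m = m1 @ b @ m2 \<and> x = p @ m1 \<and> y = m2 @ s"
proof -
  have "(x @ b) @ y = (p @ m) @ s" using eq by simp
  moreover have "length (x @ b) \<le> length (p @ m)"
    using arg_cong[OF eq, of length] assms(3) by simp
  ultimately
  obtain m2 where m2: "p @ m = x @ b @ m2" "y = m2 @ s"
    using append_eq_append_split[of "x @ b" y "p @ m" s] by auto
  then obtain m1 where "x = p @ m1" "m = m1 @ b @ m2"
    using append_eq_append_split[OF m2(1)] assms(2) by blast
  then show ?thesis using m2(2) by blast
qed

lemma concat_map_concat_replicate:
  "concat (map f (concat (replicate k w))) = concat (replicate k (concat (map f w)))"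
  by (induction k) simp_all

lemma length_concat_uniform:
  "\<forall>w \<in> set ws. length w = L \<Longrightarrow> length (concat ws) = length ws * L"
  by (induction ws) auto

lemma take_concat_uniform:
  "\<forall>w \<in> set ws. length w = L \<Longrightarrow> take (q * L) (concat ws) = concat (take q ws)"
  and drop_concat_uniform:
  "\<forall>w \<in> set ws. length w = L \<Longrightarrow> drop (q * L) (concat ws) = concat (drop q ws)"
  by (induction ws arbitrary: q; case_tac q; simp)+

lemma inv_letter_inv_letter [simp]: "inv_letter (inv_letter l) = l"
  by (simp add: inv_letter_def)

lemma inv_letter_neq [simp]: "inv_letter l \<noteq> l" "l \<noteq> inv_letter l"
  by (cases l; simp add: inv_letter_def)+

lemma inv_letter_eq_iff [simp]: "inv_letter l = inv_letter m \<longleftrightarrow> l = m"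
  by (metis inv_letter_inv_letter)

lemma inv_letter_eq_swap: "inv_letter l = m \<longleftrightarrow> l = inv_letter m"
  by auto

lemma fst_inv_letter [simp]: "fst (inv_letter l) = fst l"
  by (simp add: inv_letter_def)

lemma inv_word_Nil [simp]: "inv_word [] = []"
  and inv_word_Cons: "inv_word (l # w) = inv_word w @ [inv_letter l]"
  and inv_word_append [simp]: "inv_word (v @ w) = inv_word w @ inv_word v"
  and inv_word_replicate [simp]: "inv_word (replicate n l) = replicate n (inv_letter l)"
  and inv_word_inv_word [simp]: "inv_word (inv_word w) = w"
  and length_inv_word [simp]: "length (inv_word w) = length w"
  and inv_word_eq_Nil_iff [simp]: "inv_word w = [] \<longleftrightarrow> w = []"
  by (simp_all add: inv_word_def rev_map comp_def)

lemma inv_word_eq_iff [simp]: "inv_word v = inv_word w \<longleftrightarrow> v = w"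
  by (metis inv_word_inv_word)

lemma hd_inv_word: "w \<noteq> [] \<Longrightarrow> hd (inv_word w) = inv_letter (last w)"
  and last_inv_word: "w \<noteq> [] \<Longrightarrow> last (inv_word w) = inv_letter (hd w)"
  by (simp_all add: inv_word_def hd_rev last_rev hd_map last_map)

lemma word_over_simps [simp]:
  "word_over A []"
  "word_over A (l # w) \<longleftrightarrow> fst l \<in> A \<and> word_over A w"
  "word_over A (v @ w) \<longleftrightarrow> word_over A v \<and> word_over A w"
  "word_over A (inv_word w) \<longleftrightarrow> word_over A w"
  "word_over A (replicate n l) \<longleftrightarrow> n = 0 \<or> fst l \<in> A"
  by (auto simp: word_over_def inv_word_def image_image set_replicate_conv_if)

lemma word_over_take: "word_over A w \<Longrightarrow> word_over A (take k w)"
  by (metis append_take_drop_id word_over_simps(3))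

lemma word_over_hd: "word_over A w \<Longrightarrow> w \<noteq> [] \<Longrightarrow> fst (hd w) \<in> A"
  by (cases w) auto

lemma word_over_concat_replicate: "word_over A w \<Longrightarrow> word_over A (concat (replicate m w))"
  by (induction m) auto

lemma word_over_mono: "word_over A w \<Longrightarrow> A \<subseteq> A' \<Longrightarrow> word_over A' w"
  by (auto simp: word_over_def)

lemma reduced_word_iff: "reduced_word w \<longleftrightarrow> successively (\<lambda>l m. m \<noteq> inv_letter l) w"
  unfolding reduced_word_def by (induction w rule: induct_list012) (auto simp: inv_letter_def)

lemma reduced_word_Nil [simp]: "reduced_word []"
  and reduced_word_singleton [simp]: "reduced_word [l]"
  by (simp_all add: reduced_word_iff)

lemma reduced_word_Cons:
  "reduced_word (l # w) \<longleftrightarrow> reduced_word w \<and> (w = [] \<or> hd w \<noteq> inv_letter l)"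
  by (cases w) (auto simp: reduced_word_iff)

lemma reduced_word_append: "reduced_word (v @ w) \<longleftrightarrow> reduced_word v \<and> reduced_word w \<and>
    (v = [] \<or> w = [] \<or> hd w \<noteq> inv_letter (last v))"
  by (simp add: reduced_word_iff successively_append_iff)

lemma reduced_word_inv_word [simp]: "reduced_word (inv_word w) \<longleftrightarrow> reduced_word w"
proof -
  have "reduced_word w \<Longrightarrow> reduced_word (inv_word w)" for w :: "('a \<times> bool) list"
    unfolding reduced_word_iff inv_word_def successively_rev successively_map
    by (erule successively_mono) (auto simp: inv_letter_def)
  then show ?thesis by (metis inv_word_inv_word)
qed

lemma reduced_word_replicate: "reduced_word (replicate m l)"
  by (induction m) (auto simp: reduced_word_Cons)

lemma reduced_word_concat_replicate:
  assumes "reduced_word w" and "w \<noteq> []" and "hd w \<noteq> inv_letter (last w)"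
  shows "reduced_word (concat (replicate m w))"
proof (induction m)
  case (Suc m)
  then show ?case using assms by (cases m) (simp_all add: reduced_word_append)
qed simp

lemma reduced_word_cancellation:
  assumes "reduced_word x" and "reduced_word y"
  shows "\<exists>x' c y'. x = x' @ c \<and> y = inv_word c @ y' \<and> reduced_word (x' @ y')"
  using assms(1)
proof (induction x)
  case Nil
  show ?case using assms(2) by simp
next
  case (Cons l x)
  then obtain x' c y' where split: "x = x' @ c" "y = inv_word c @ y'"
    and red: "reduced_word (x' @ y')" by (auto simp: reduced_word_Cons)
  show ?case
  proof (cases "x' = [] \<and> y' \<noteq> [] \<and> hd y' = inv_letter l")
    case True
    then obtain y'' where "y' = inv_letter l # y''" by (cases y') auto
    then show ?thesis using split red True
      by (intro exI[of _ "[]"] exI[of _ "l # c"] exI[of _ y''])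
        (simp add: inv_word_Cons reduced_word_Cons)
  next
    case False
    have "x' @ y' = [] \<or> hd (x' @ y') \<noteq> inv_letter l"
      using False Cons.prems split by (cases x') (auto simp: reduced_word_Cons)
    then have "reduced_word (l # x' @ y')" using red by (simp add: reduced_word_Cons)
    then show ?thesis using split by (intro exI[of _ "l # x'"] exI[of _ c] exI[of _ y']) simp
  qed
qed

section \<open>Evaluating words in a group\<close>

lemma word_eval_Nil [simp]: "word_eval G [] = \<one>\<^bsub>G\<^esub>"
  and word_eval_Cons: "word_eval G (l # w) = letter_eval G l \<otimes>\<^bsub>G\<^esub> word_eval G w"
  by (cases l; simp add: word_eval_def letter_eval_def)+

lemma set_mult_iff: "z \<in> K <#>\<^bsub>G\<^esub> Q \<longleftrightarrow> (\<exists>k \<in> K. \<exists>q \<in> Q. z = k \<otimes>\<^bsub>G\<^esub> q)"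
  by (auto simp: set_mult_def)

context group
begin

lemma mult_inv_cancel_left [simp]: "x \<in> carrier G \<Longrightarrow> y \<in> carrier G \<Longrightarrow> x \<otimes> (inv x \<otimes> y) = y"
  and inv_mult_cancel_left [simp]: "x \<in> carrier G \<Longrightarrow> y \<in> carrier G \<Longrightarrow> inv x \<otimes> (x \<otimes> y) = y"
  by (simp_all add: m_assoc[symmetric])

lemma subgroup_nat_pow_closed: "subgroup H G \<Longrightarrow> h \<in> H \<Longrightarrow> h [^] (n::nat) \<in> H"
  by (metis int_pow_int subgroup_int_pow_closed)

lemma conj_nat_pow:
  assumes "z \<in> carrier G" "r \<in> carrier G"
  shows "z \<otimes> r [^] (m::nat) \<otimes> inv z = (z \<otimes> r \<otimes> inv z) [^] m"
proof (induction m)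
  case (Suc m)
  have "z \<otimes> r [^] Suc m \<otimes> inv z = (z \<otimes> r [^] m \<otimes> inv z) \<otimes> (z \<otimes> r \<otimes> inv z)"
    using assms by (simp add: m_assoc)
  then show ?case using Suc by simp
qed (use assms in simp)

lemma letter_eval_closed [simp]: "fst l \<in> carrier G \<Longrightarrow> letter_eval G l \<in> carrier G"
  by (simp add: letter_eval_def)

lemma letter_eval_inv_letter: "fst l \<in> carrier G \<Longrightarrow> letter_eval G (inv_letter l) = inv (letter_eval G l)"
  by (simp add: letter_eval_def inv_letter_def)

lemma word_eval_closed [simp]: "word_over (carrier G) w \<Longrightarrow> word_eval G w \<in> carrier G"
  by (induction w) (auto simp: word_eval_Cons)

lemma word_eval_singleton [simp]: "fst l \<in> carrier G \<Longrightarrow> word_eval G [l] = letter_eval G l"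
  by (simp add: word_eval_Cons)

lemma word_eval_append:
  "word_over (carrier G) v \<Longrightarrow> word_over (carrier G) w \<Longrightarrow>
    word_eval G (v @ w) = word_eval G v \<otimes> word_eval G w"
  by (induction v) (simp_all add: word_eval_Cons m_assoc)

lemma word_eval_inv_word:
  "word_over (carrier G) w \<Longrightarrow> word_eval G (inv_word w) = inv (word_eval G w)"
  by (induction w)
    (simp_all add: inv_word_Cons word_eval_append word_eval_Cons letter_eval_inv_letter inv_mult_group)

lemma word_eval_replicate:
  "fst l \<in> carrier G \<Longrightarrow> word_eval G (replicate n l) = letter_eval G l [^] n"
  by (induction n) (simp_all add: word_eval_Cons flip: nat_pow_Suc2)

lemma word_eval_concat_replicate:
  "word_over (carrier G) w \<Longrightarrow> word_eval G (concat (replicate n w)) = word_eval G w [^] n"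
  by (induction n) (simp_all add: word_eval_append word_over_concat_replicate flip: nat_pow_Suc2)

lemma word_eval_cancel:
  assumes "word_over (carrier G) x" "word_over (carrier G) c" "word_over (carrier G) y"
  shows "word_eval G (x @ c) \<otimes> word_eval G (inv_word c @ y) = word_eval G (x @ y)"
  using assms by (simp add: word_eval_append word_eval_inv_word m_assoc)

lemma letter_eval_mem_generate:
  "fst l \<in> A \<Longrightarrow> letter_eval G l \<in> generate G A"
  by (simp add: letter_eval_def generate.incl generate.inv)

lemma word_eval_mem_generate:
  "word_over A w \<Longrightarrow> word_eval G w \<in> generate G A"
  by (induction w) (simp_all add: word_eval_Cons generate.one generate.eng letter_eval_mem_generate)

lemma word_eval_consistent:
  assumes "subgroup H G" and "word_over H w"
  shows "word_eval (G\<lparr>carrier := H\<rparr>) w = word_eval G w"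
  using assms(2)
proof (induction w)
  case (Cons l w)
  then show ?case using assms(1) m_inv_consistent
    by (simp add: word_eval_Cons letter_eval_def)
qed (simp add: word_eval_def)

lemma exists_reduced_word:
  assumes "g \<in> generate G A" and "A \<subseteq> carrier G"
  shows "\<exists>w. word_over A w \<and> reduced_word w \<and> word_eval G w = g"
  using assms(1)
proof induction
  case one
  show ?case by (intro exI[of _ "[]"]) simp
next
  case (incl h)
  then show ?case using assms(2) by (intro exI[of _ "[(h, True)]"]) (auto simp: letter_eval_def)
next
  case (inv h)
  then show ?case using assms(2) by (intro exI[of _ "[(h, False)]"]) (auto simp: letter_eval_def)
next
  case (eng h1 h2)
  then obtain w1 w2 where w: "word_over A w1" "reduced_word w1" "word_eval G w1 = h1"
    "word_over A w2" "reduced_word w2" "word_eval G w2 = h2" by blast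
  then obtain x c y where "w1 = x @ c" "w2 = inv_word c @ y" "reduced_word (x @ y)"
    using reduced_word_cancellation by blast
  moreover have "word_over (carrier G) w" if "word_over A w" for w
    using that assms(2) by (rule word_over_mono)
  ultimately show ?case using w by (intro exI[of _ "x @ y"]) (auto simp: word_eval_cancel)
qed

lemma exists_cyclically_reduced_conjugate:
  assumes A: "A \<subseteq> carrier G" and w: "word_over A w" "reduced_word w" "w \<noteq> []"
  shows "\<exists>t \<in> generate G A. \<exists>w'. word_over A w' \<and> reduced_word w' \<and> w' \<noteq> [] \<and>
    hd w' \<noteq> inv_letter (last w') \<and> word_eval G w = t \<otimes> word_eval G w' \<otimes> inv t"
  using w
proof (induction "length w" arbitrary: w rule: less_induct)
  case less
  have sub: "subgroup (generate G A) G" using A by (rule generate_is_subgroup)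
  have over: "word_over (carrier G) v" if "word_over A v" for v
    using that A by (rule word_over_mono)
  show ?case
  proof (cases "hd w = inv_letter (last w)")
    case False
    then show ?thesis using less.prems over sub subgroup.one_closed
      by (intro bexI[of _ \<one>]) auto
  next
    case True
    obtain l rest where w: "w = l # rest" using less.prems(3) by (cases w) auto
    then have "rest \<noteq> []" "last rest = inv_letter l" using True
      by (auto split: if_splits simp: inv_letter_eq_swap)
    then obtain w0 where w0: "w = l # w0 @ [inv_letter l]"
      using w append_butlast_last_id by metis
    have w0_props: "word_over A w0" "reduced_word w0" "w0 \<noteq> []" "fst l \<in> A"
      using less.prems unfolding w0 by (auto simp: reduced_word_Cons reduced_word_append)
    obtain t w' where t: "t \<in> generate G A" "word_over A w'" "reduced_word w'" "w' \<noteq> []"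
      "hd w' \<noteq> inv_letter (last w')" "word_eval G w0 = t \<otimes> word_eval G w' \<otimes> inv t"
      using less.hyps[of w0] w0_props w0 by auto
    have carr: "letter_eval G l \<in> carrier G" "t \<in> carrier G" "word_eval G w' \<in> carrier G"
      using w0_props(4) A t(1,2) over subgroup.mem_carrier[OF sub] by auto
    have "word_eval G w = letter_eval G l \<otimes> word_eval G w0 \<otimes> inv (letter_eval G l)"
      using w0_props A over
      by (auto simp: w0 word_eval_Cons word_eval_append letter_eval_inv_letter m_assoc)
    also have "\<dots> = (letter_eval G l \<otimes> t) \<otimes> word_eval G w' \<otimes> inv (letter_eval G l \<otimes> t)"
      using t(6) carr by (simp add: m_assoc inv_mult_group)
    finally show ?thesis
      using t(2-5) letter_eval_mem_generate[OF w0_props(4)] t(1) subgroup.m_closed[OF sub]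
      by blast
  qed
qed

lemma set_mult_mult_left_iff:
  assumes K: "subgroup K G" and Q: "Q \<subseteq> carrier G" and k: "k \<in> K" and x: "x \<in> carrier G"
  shows "k \<otimes> x \<in> K <#> Q \<longleftrightarrow> x \<in> K <#> Q"
proof -
  have closed: "k' \<otimes> z \<in> K <#> Q" if k': "k' \<in> K" and z: "z \<in> K <#> Q" for k' z
  proof -
    obtain k'' q where kq: "k'' \<in> K" "q \<in> Q" "z = k'' \<otimes> q" using z by (auto simp: set_mult_iff)
    then have "k' \<otimes> z = (k' \<otimes> k'') \<otimes> q"
      using k' K Q by (simp add: m_assoc subgroup.mem_carrier subset_iff)
    then show ?thesis using k' kq K by (auto simp: set_mult_iff subgroup.m_closed)
  qed
  have "inv k \<otimes> (k \<otimes> x) = x" using K k x by (simp add: m_assoc[symmetric] subgroup.mem_carrier)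
  then show ?thesis using closed[of "inv k" "k \<otimes> x"] closed[of k x] K k
    by (auto simp: subgroup.m_inv_closed)
qed

lemma finite_rcosets_if_covered:
  assumes K: "subgroup K G" and Q: "finite Q" "Q \<subseteq> carrier G"
    and cover: "carrier G \<subseteq> K <#> Q"
  shows "finite (rcosets K)"
proof -
  have "rcosets K \<subseteq> (\<lambda>q. K #> q) ` Q"
  proof
    fix Z assume "Z \<in> rcosets K"
    then obtain y where y: "y \<in> carrier G" "Z = K #> y" by (auto simp: RCOSETS_def)
    moreover have "y \<in> K <#> Q" using cover y(1) by blast
    ultimately obtain k q where kq: "y = k \<otimes> q" "k \<in> K" "q \<in> Q" "Z = K #> y"
      by (auto simp: set_mult_iff)
    then have "K #> q = K #> y"
      using K Q by (intro repr_independence) (auto simp: rcosI subgroup.subset)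
    then show "Z \<in> (\<lambda>q. K #> q) ` Q" using y kq by auto
  qed
  then show ?thesis using Q(1) finite_surj by blast
qed

text \<open>Pigeonhole: two of the elements \<open>x y\<^sup>i\<close> share their right factor in \<open>Q\<close>.\<close>

lemma conjugate_power_mem_if_powers_in_set_mult:
  assumes K: "subgroup K G" and Q: "finite Q" "Q \<subseteq> carrier G"
    and x: "x \<in> carrier G" and y: "y \<in> carrier G"
    and powers: "\<And>i::nat. x \<otimes> y [^] i \<in> K <#> Q"
  shows "\<exists>m::nat. m > 0 \<and> x \<otimes> y [^] m \<otimes> inv x \<in> K"
proof -
  have "\<forall>i::nat. \<exists>k\<in>K. \<exists>q\<in>Q. x \<otimes> y [^] i = k \<otimes> q"
    using powers by (simp add: set_mult_iff)
  then obtain kf qf where f: "\<And>i. qf i \<in> Q" "\<And>i. kf i \<in> K" "\<And>i::nat. x \<otimes> y [^] i = kf i \<otimes> qf i"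
    by metis
  have "\<not> inj qf"
  proof
    assume "inj qf"
    moreover have "finite (range qf)" using f(1) Q(1) by (meson finite_subset image_subsetI)
    ultimately show False by (simp add: finite_image_iff)
  qed
  then obtain i j where "i \<noteq> j" "qf i = qf j" by (auto simp: inj_def)
  then obtain i j where ij: "i < j" "qf i = qf j" by (metis linorder_neqE_nat)
  define m where "m = j - i"
  have carr: "kf i \<in> carrier G" "kf j \<in> carrier G" "qf i \<in> carrier G"
    using f(1,2) Q(2) subgroup.mem_carrier[OF K] by auto
  have "y [^] j = y [^] m \<otimes> y [^] i" using ij y by (simp add: m_def nat_pow_mult)
  then have "x \<otimes> y [^] m \<otimes> inv x = (x \<otimes> y [^] j) \<otimes> inv (x \<otimes> y [^] i)"
    using x y by (simp add: inv_mult_group m_assoc)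
  also have "\<dots> = kf j \<otimes> inv (kf i)"
    using ij carr by (simp add: f(3) inv_mult_group m_assoc)
  finally have "x \<otimes> y [^] m \<otimes> inv x \<in> K"
    using f(2) K by (simp add: subgroup.m_closed subgroup.m_inv_closed)
  moreover have "m > 0" using ij by (simp add: m_def)
  ultimately show ?thesis by blast
qed

end

section \<open>Normal forms in a free group\<close>

locale free_group_basis = group F for F (structure) +
  fixes B :: "'a set"
  assumes basis: "free_basis F B"
begin

lemma basis_subset: "B \<subseteq> carrier F"
  using basis by (simp add: free_basis_def)

lemma basis_word_carrier: "word_over B w \<Longrightarrow> word_over (carrier F) w"
  using basis_subset word_over_mono by blast

lemma word_eval_basis_closed [simp]: "word_over B w \<Longrightarrow> word_eval F w \<in> carrier F"
  by (simp add: basis_word_carrier)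

lemma word_eval_reduced_neq_one:
  "word_over B w \<Longrightarrow> w \<noteq> [] \<Longrightarrow> reduced_word w \<Longrightarrow> word_eval F w \<noteq> \<one>"
  using basis by (auto simp: free_basis_def word_over_def)

lemma word_eval_reduced_inj:
  assumes "word_over B v" "word_over B w" "reduced_word v" "reduced_word w"
    and "word_eval F v = word_eval F w"
  shows "v = w"
proof -
  obtain x c y where split: "v = x @ c" "inv_word w = inv_word c @ y"
    and red: "reduced_word (x @ y)"
    using reduced_word_cancellation[of v "inv_word w"] assms(3,4) by auto
  have over: "word_over B x" "word_over B c" "word_over B y"
    using assms(1,2) split by (metis word_over_simps(3,4))+
  then have "word_eval F (x @ y) = word_eval F v \<otimes> inv (word_eval F w)"
    using split word_eval_cancel[of x c y] assms(2)
    by (simp add: basis_word_carrier word_eval_inv_word[symmetric])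
  also have "\<dots> = \<one>" using assms by simp
  finally have "x @ y = []"
    using word_eval_reduced_neq_one[of "x @ y"] red over by auto
  then show ?thesis using split by simp
qed

definition normal_form :: "'a \<Rightarrow> ('a \<times> bool) list" where
  "normal_form g = (THE w. word_over B w \<and> reduced_word w \<and> word_eval F w = g)"

lemma normal_form:
  assumes "g \<in> carrier F"
  shows "word_over B (normal_form g)" "reduced_word (normal_form g)"
    "word_eval F (normal_form g) = g"
proof -
  have "generate F B = carrier F" using basis by (simp add: free_basis_def)
  then have "\<exists>!w. word_over B w \<and> reduced_word w \<and> word_eval F w = g"
    using exists_reduced_word[of g B] assms basis_subset word_eval_reduced_inj by auto
  then have "word_over B (normal_form g) \<and> reduced_word (normal_form g) \<and>
      word_eval F (normal_form g) = g"
    unfolding normal_form_def by (rule theI')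
  then show "word_over B (normal_form g)" "reduced_word (normal_form g)"
    "word_eval F (normal_form g) = g" by auto
qed

lemma normal_form_word_eval:
  assumes "word_over B w" and "reduced_word w"
  shows "normal_form (word_eval F w) = w"
  by (rule word_eval_reduced_inj) (simp_all add: normal_form assms)

lemma normal_form_one [simp]: "normal_form \<one> = []"
  using normal_form_word_eval[of "[]"] by simp

lemma normal_form_inv: "g \<in> carrier F \<Longrightarrow> normal_form (inv g) = inv_word (normal_form g)"
  using normal_form_word_eval[of "inv_word (normal_form g)"] normal_form[of g]
  by (simp add: word_eval_inv_word basis_word_carrier)

lemma normal_form_mult:
  assumes "g \<in> carrier F" "h \<in> carrier F"
  shows "\<exists>x c y. normal_form g = x @ c \<and> normal_form h = inv_word c @ y \<and>
    normal_form (g \<otimes> h) = x @ y"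
proof -
  note g = normal_form[OF assms(1)] and h = normal_form[OF assms(2)]
  obtain x c y where split: "normal_form g = x @ c" "normal_form h = inv_word c @ y"
    and red: "reduced_word (x @ y)"
    using reduced_word_cancellation[OF g(2) h(2)] by blast
  have over: "word_over B x" "word_over B c" "word_over B y"
    using g(1) h(1) unfolding split by auto
  have "g \<otimes> h = word_eval F (x @ c) \<otimes> word_eval F (inv_word c @ y)"
    using g(3) h(3) unfolding split by simp
  also have "\<dots> = word_eval F (x @ y)"
    using over by (simp add: word_eval_cancel basis_word_carrier)
  finally show ?thesis
    using normal_form_word_eval[of "x @ y"] over red split by auto
qed

lemma normal_form_mult_prefix:
  assumes "g \<in> carrier F" "h \<in> carrier F"
  shows "take p (normal_form (g \<otimes> h)) = take p (normal_form g) \<or>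
    (\<exists>p'. word_eval F (take p (normal_form (g \<otimes> h))) = g \<otimes> word_eval F (take p' (normal_form h)))"
proof -
  obtain x c y where split: "normal_form g = x @ c" "normal_form h = inv_word c @ y"
    "normal_form (g \<otimes> h) = x @ y"
    using normal_form_mult[OF assms] by blast
  have over: "word_over B x" "word_over B c" "word_over B y"
    using normal_form(1)[OF assms(1)] normal_form(1)[OF assms(2)] unfolding split by auto
  show ?thesis
  proof (cases "p \<le> length x")
    case True
    then show ?thesis by (simp add: split)
  next
    case False
    have "g = word_eval F x \<otimes> word_eval F c"
      using normal_form(3)[OF assms(1)] over by (simp add: split word_eval_append basis_word_carrier)
    then have "word_eval F x = g \<otimes> word_eval F (inv_word c)"
      using over assms by (simp add: word_eval_inv_word basis_word_carrier m_assoc)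
    then have "word_eval F (take p (normal_form (g \<otimes> h))) =
        g \<otimes> word_eval F (take (length c + (p - length x)) (normal_form h))"
      using False over assms(1) word_over_take[OF over(3)]
      by (simp add: split word_eval_append basis_word_carrier m_assoc)
    then show ?thesis by blast
  qed
qed

lemma normal_form_conjugate:
  assumes g: "g \<in> carrier F" and R: "word_over B R" "reduced_word R"
    and long: "2 * length (normal_form g) \<le> length R"
  shows "\<exists>P M S A Y. R = P @ M @ S \<and> length P \<le> length (normal_form g) \<and>
    length S \<le> length (normal_form g) \<and> normal_form (g \<otimes> word_eval F R \<otimes> inv g) = A @ M @ Y \<and>
    word_eval F A = g \<otimes> word_eval F P"
proof -
  let ?r = "word_eval F R"
  have r: "?r \<in> carrier F" "normal_form ?r = R" using R by (simp_all add: normal_form_word_eval)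
  obtain A c D where left: "normal_form g = A @ c" "R = inv_word c @ D"
    "normal_form (g \<otimes> ?r) = A @ D"
    using normal_form_mult[OF g r(1)] r(2) by auto
  obtain V c' Y where right: "A @ D = V @ c'" "inv_word (normal_form g) = inv_word c' @ Y"
    "normal_form (g \<otimes> ?r \<otimes> inv g) = V @ Y"
    using normal_form_mult[OF m_closed[OF g r(1)] inv_closed[OF g]] left(3) normal_form_inv[OF g]
    by auto
  have "length c' \<le> length (normal_form g)" using arg_cong[OF right(2), of length] by simp
  then have "length A \<le> length V" using arg_cong[OF right(1), of length] long left by simp
  then obtain M where M: "V = A @ M" "D = M @ c'" using append_eq_append_split[OF right(1)] by blast
  have over: "word_over B A" "word_over B c"
    using normal_form(1)[OF g] by (simp_all add: left(1))
  have "g = word_eval F A \<otimes> word_eval F c"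
    using normal_form(3)[OF g] over by (simp add: left(1) word_eval_append basis_word_carrier)
  then have "word_eval F A = g \<otimes> word_eval F (inv_word c)"
    using over g by (simp add: inv_solve_right word_eval_inv_word basis_word_carrier)
  then show ?thesis using left right M \<open>length c' \<le> length (normal_form g)\<close>
    by (intro exI[of _ "inv_word c"] exI[of _ M] exI[of _ c'] exI[of _ A] exI[of _ Y]) simp
qed

lemma normal_form_conjugate_contains:
  assumes g: "g \<in> carrier F" and R: "word_over B (U @ b @ T)" "reduced_word (U @ b @ T)"
    and long: "length (normal_form g) \<le> length U" "length (normal_form g) \<le> length T"
  shows "\<exists>xs ys. normal_form (g \<otimes> word_eval F (U @ b @ T) \<otimes> inv g) = xs @ b @ ys \<and>
    word_eval F xs = g \<otimes> word_eval F U"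
proof -
  have "2 * length (normal_form g) \<le> length (U @ b @ T)" using long by simp
  then obtain P M S A Y where PMS: "U @ b @ T = P @ M @ S" "length P \<le> length (normal_form g)"
    "length S \<le> length (normal_form g)"
    "normal_form (g \<otimes> word_eval F (U @ b @ T) \<otimes> inv g) = A @ M @ Y"
    "word_eval F A = g \<otimes> word_eval F P"
    using normal_form_conjugate[OF g R] by blast
  have "length P \<le> length U" "length S \<le> length T" using PMS(2,3) long by linarith+
  then obtain M1 M2 where M: "M = M1 @ b @ M2" "U = P @ M1"
    using append_eq_append_within[OF PMS(1)[symmetric]] by blast
  have "word_over B A"
    using normal_form(1)[of "g \<otimes> word_eval F (U @ b @ T) \<otimes> inv g"] PMS(4) g R(1) by simp
  then have "word_eval F (A @ M1) = g \<otimes> word_eval F U"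
    using PMS(5) g R(1) M(2) by (simp add: word_eval_append basis_word_carrier m_assoc)
  moreover have "normal_form (g \<otimes> word_eval F (U @ b @ T) \<otimes> inv g) = (A @ M1) @ b @ (M2 @ Y)"
    using PMS(4) M(1) by simp
  ultimately show ?thesis by blast
qed

section \<open>Escaping a finitely generated subgroup of infinite index\<close>

definition generator_prefixes :: "'a set \<Rightarrow> 'a set" where
  "generator_prefixes S = insert \<one> (\<Union>s \<in> S \<union> (\<lambda>s. inv s) ` S.
     (\<lambda>p. word_eval F (take p (normal_form s))) ` {..length (normal_form s)})"

lemma finite_generator_prefixes: "finite S \<Longrightarrow> finite (generator_prefixes S)"
  by (simp add: generator_prefixes_def)

lemma generator_prefixes_carrier: "S \<subseteq> carrier F \<Longrightarrow> generator_prefixes S \<subseteq> carrier F"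
  by (auto simp: generator_prefixes_def normal_form word_over_take)

lemma generator_prefix_mem:
  assumes "s \<in> S \<union> (\<lambda>s. inv s) ` S"
  shows "word_eval F (take p (normal_form s)) \<in> generator_prefixes S"
proof -
  have "take p (normal_form s) = take (min p (length (normal_form s))) (normal_form s)"
    by (simp add: min_def)
  then show ?thesis using assms unfolding generator_prefixes_def by force
qed

lemma normal_form_prefix_mem_set_mult:
  assumes S: "S \<subseteq> carrier F" and k: "k \<in> generate F S"
  shows "word_eval F (take p (normal_form k)) \<in> generate F S <#> generator_prefixes S"
  using k
proof (induction arbitrary: p)
  have base: "q \<in> generate F S <#> generator_prefixes S" if "q \<in> generator_prefixes S" for q
    using that generate.one[of F S] generator_prefixes_carrier[OF S]
    by (force simp: set_mult_iff)
  {
    case one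
    show ?case by (rule base) (simp add: generator_prefixes_def)
  next
    case (incl h)
    show ?case by (rule base, rule generator_prefix_mem) (simp add: incl)
  next
    case (inv h)
    show ?case by (rule base, rule generator_prefix_mem) (simp add: inv)
  }
next
  case (eng h1 h2)
  have sub: "subgroup (generate F S) F" using S by (rule generate_is_subgroup)
  have h: "h1 \<in> carrier F" "h2 \<in> carrier F"
    using eng.hyps subgroup.mem_carrier[OF sub] by auto
  consider "take p (normal_form (h1 \<otimes> h2)) = take p (normal_form h1)"
    | p' where "word_eval F (take p (normal_form (h1 \<otimes> h2))) =
        h1 \<otimes> word_eval F (take p' (normal_form h2))"
    using normal_form_mult_prefix[OF h] by blast
  then show ?case
  proof cases
    case 1
    then show ?thesis using eng.IH(1) by simp
  next
    case 2
    moreover have "word_eval F (take p' (normal_form h2)) \<in> carrier F"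
      using word_over_take[OF normal_form(1)[OF h(2)]] by simp
    ultimately show ?thesis
      using eng.IH(2) set_mult_mult_left_iff[OF sub generator_prefixes_carrier[OF S] eng.hyps(1)]
      by simp
  qed
qed

definition escapes :: "'a set \<Rightarrow> 'a set \<Rightarrow> 'a \<Rightarrow> ('a \<times> bool) list \<Rightarrow> bool" where
  "escapes K Q q u \<longleftrightarrow> (\<exists>p. q \<otimes> word_eval F (take p u) \<notin> K <#> Q)"

lemma escapes_append: "escapes K Q q u \<Longrightarrow> escapes K Q q (u @ v)"
proof -
  assume "escapes K Q q u"
  then obtain p where "q \<otimes> word_eval F (take p u) \<notin> K <#> Q" by (auto simp: escapes_def)
  moreover have "take p u = take (min p (length u)) (u @ v)" by (simp add: min_def)
  ultimately show ?thesis unfolding escapes_def by metis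
qed

lemma subword_of_normal_form_not_escapes:
  assumes K: "subgroup K F" and Q: "Q \<subseteq> carrier F"
    and prefixes: "\<And>p. word_eval F (take p (normal_form k)) \<in> K <#> Q"
    and k: "k \<in> carrier F" and nf: "normal_form k = xs @ v @ ys"
  shows "\<exists>q \<in> Q. \<not> escapes K Q q v"
proof -
  obtain \<kappa> q where \<kappa>q: "\<kappa> \<in> K" "q \<in> Q" "word_eval F xs = \<kappa> \<otimes> q"
    using prefixes[of "length xs"] unfolding nf by (auto simp: set_mult_iff)
  have over: "word_over B xs" "word_over B v"
    using normal_form(1)[OF k] unfolding nf by simp_all
  have carr: "\<kappa> \<in> carrier F" "q \<in> carrier F" "word_eval F (take p v) \<in> carrier F" for p
    using \<kappa>q(1,2) K Q word_over_take[OF over(2)] subgroup.mem_carrier by auto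
  have "q \<otimes> word_eval F (take p v) \<in> K <#> Q" for p
  proof -
    have "take (length xs + min p (length v)) (xs @ v @ ys) = xs @ take p v"
      by (simp add: min_def)
    moreover have "word_eval F (xs @ take p v) = (\<kappa> \<otimes> q) \<otimes> word_eval F (take p v)"
      unfolding \<kappa>q(3)[symmetric]
      by (rule word_eval_append) (simp_all only: basis_word_carrier over word_over_take)
    ultimately have "\<kappa> \<otimes> (q \<otimes> word_eval F (take p v)) \<in> K <#> Q"
      using prefixes[of "length xs + min p (length v)"] carr unfolding nf by (simp add: m_assoc)
    then show ?thesis using set_mult_mult_left_iff[OF K Q \<kappa>q(1)] carr by simp
  qed
  then show ?thesis using \<kappa>q(2) by (auto simp: escapes_def)
qed

lemma set_mult_covers_carrier:
  assumes K: "subgroup K F" and Q: "Q \<subseteq> carrier F" and x: "x \<in> carrier F"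
    and c: "c \<in> B" "c \<noteq> fst e" and m: "m > (0::nat)" "x \<otimes> c [^] m \<otimes> inv x \<in> K"
    and ext: "\<And>v. word_over B v \<Longrightarrow> reduced_word v \<Longrightarrow> v = [] \<or> hd v \<noteq> inv_letter e \<Longrightarrow>
      x \<otimes> word_eval F v \<in> K <#> Q"
  shows "carrier F \<subseteq> K <#> Q"
proof
  fix y assume y: "y \<in> carrier F"
  have cc: "c \<in> carrier F" using c(1) basis_subset by blast
  have ce: "(c, True) \<noteq> inv_letter e" "e \<noteq> inv_letter (c, True)" "e \<noteq> (c, True)"
    using c(2) by (cases e; auto simp: inv_letter_def)+
  define v where "v = normal_form (inv x \<otimes> y)"
  have v: "word_over B v" "reduced_word v" "word_eval F v = inv x \<otimes> y"
    using normal_form x y by (simp_all add: v_def)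
  have xv: "x \<otimes> word_eval F v = y" using v(3) x y by simp
  show "y \<in> K <#> Q"
  proof (cases "v = [] \<or> hd v \<noteq> inv_letter e")
    case True
    then show ?thesis using ext[OF v(1,2)] xv by simp
  next
    case False
    let ?v = "replicate m (c, True) @ v"
    have "reduced_word ?v" "hd ?v \<noteq> inv_letter e"
      using False v(2) m(1) ce by (simp_all add: reduced_word_append reduced_word_replicate)
    then have "x \<otimes> word_eval F ?v \<in> K <#> Q" using ext v(1) c(1) m(1) by simp
    moreover have "x \<otimes> word_eval F ?v = (x \<otimes> c [^] m \<otimes> inv x) \<otimes> y"
      using v(1) cc x y xv[symmetric]
      by (simp add: word_eval_append basis_word_carrier word_eval_replicate letter_eval_def m_assoc)
    ultimately show ?thesis
      using set_mult_mult_left_iff[OF K Q m(2)] y by simp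
  qed
qed

lemma exists_escaping_extension:
  assumes K: "subgroup K F" "infinite (rcosets K)" and Q: "finite Q" "Q \<subseteq> carrier F"
    and x: "x \<in> carrier F" and c: "c \<in> B" "c \<noteq> fst e"
  shows "\<exists>v. word_over B v \<and> reduced_word v \<and> (v = [] \<or> hd v \<noteq> inv_letter e) \<and>
    x \<otimes> word_eval F v \<notin> K <#> Q"
proof (rule ccontr)
  assume "\<not> ?thesis"
  then have ext: "x \<otimes> word_eval F v \<in> K <#> Q"
    if "word_over B v" "reduced_word v" "v = [] \<or> hd v \<noteq> inv_letter e" for v
    using that by blast
  have cc: "c \<in> carrier F" using c(1) basis_subset by blast
  have ce: "(c, True) \<noteq> inv_letter e" using c(2) by (cases e) (auto simp: inv_letter_def)
  have "x \<otimes> c [^] i \<in> K <#> Q" for i :: nat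
  proof -
    have "replicate i (c, True) = [] \<or> hd (replicate i (c, True)) \<noteq> inv_letter e"
      using ce by (cases i) auto
    then have "x \<otimes> word_eval F (replicate i (c, True)) \<in> K <#> Q"
      using ext[OF _ reduced_word_replicate] c(1) by simp
    then show ?thesis using cc by (simp add: word_eval_replicate letter_eval_def)
  qed
  then obtain m :: nat where "m > 0" "x \<otimes> c [^] m \<otimes> inv x \<in> K"
    using conjugate_power_mem_if_powers_in_set_mult[OF K(1) Q x cc] by blast
  then have "carrier F \<subseteq> K <#> Q" using set_mult_covers_carrier[OF K(1) Q(2) x c] ext by blast
  then show False using finite_rcosets_if_covered[OF K(1) Q] K(2) by blast
qed

lemma exists_escaping_word:
  assumes "finite P"
    and P: "\<And>i q. (i, q) \<in> P \<Longrightarrow> subgroup (K i) F \<and> infinite (rcosets (K i)) \<and>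
      finite (Q i) \<and> Q i \<subseteq> carrier F \<and> q \<in> carrier F"
    and ab: "a \<in> B" "b \<in> B" "a \<noteq> b"
  shows "\<exists>u. word_over B u \<and> reduced_word u \<and> u \<noteq> [] \<and> (\<forall>(i, q) \<in> P. escapes (K i) (Q i) q u)"
  using assms(1,2)
proof (induction rule: finite_induct)
  case empty
  then show ?case using ab by (intro exI[of _ "[(a, True)]"]) simp
next
  case (insert iq P)
  obtain i q where iq: "iq = (i, q)" by force
  from insert obtain u where u: "word_over B u" "reduced_word u" "u \<noteq> []"
    "\<forall>(i, q) \<in> P. escapes (K i) (Q i) q u" by auto
  have hyp: "subgroup (K i) F" "infinite (rcosets (K i))" "finite (Q i)" "Q i \<subseteq> carrier F"
    "q \<in> carrier F" using insert.prems iq by auto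
  obtain v where v: "word_over B v" "reduced_word (u @ v)" "escapes (K i) (Q i) q (u @ v)"
  proof (cases "escapes (K i) (Q i) q u")
    case True
    then show ?thesis using that[of "[]"] u by simp
  next
    case False
    obtain c where c: "c \<in> B" "c \<noteq> fst (last u)" using ab by blast
    have "q \<otimes> word_eval F u \<in> carrier F" using hyp(5) u(1) by simp
    then obtain v where v: "word_over B v" "reduced_word v" "v = [] \<or> hd v \<noteq> inv_letter (last u)"
        "q \<otimes> word_eval F u \<otimes> word_eval F v \<notin> K i <#> Q i"
      using exists_escaping_extension[OF hyp(1-4) _ c] by blast
    have "q \<otimes> word_eval F (take (length (u @ v)) (u @ v)) \<notin> K i <#> Q i"
      using v(4) u(1) v(1) hyp(5) by (simp add: word_eval_append basis_word_carrier m_assoc)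
    then have "escapes (K i) (Q i) q (u @ v)" unfolding escapes_def by blast
    then show ?thesis using that[of v] u v by (simp add: reduced_word_append)
  qed
  have "\<forall>(i', q') \<in> insert iq P. escapes (K i') (Q i') q' (u @ v)"
    using u(4) v(3) iq escapes_append by auto
  then show ?case using u v by (intro exI[of _ "u @ v"]) auto
qed

lemma exists_test_word:
  fixes K :: "nat \<Rightarrow> 'a set" and n :: nat
  assumes K: "\<And>i. i < n \<Longrightarrow> subgroup (K i) F" "\<And>i. i < n \<Longrightarrow> finitely_generated_subgroup F (K i)"
    "\<And>i. i < n \<Longrightarrow> infinite (rcosets (K i))"
    and ab: "a \<in> B" "b \<in> B" "a \<noteq> b"
  obtains u Q where "word_over B u" "reduced_word u" "u \<noteq> []" "\<And>i. i < n \<Longrightarrow> Q i \<subseteq> carrier F"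
    "\<And>i k p. i < n \<Longrightarrow> k \<in> K i \<Longrightarrow> word_eval F (take p (normal_form k)) \<in> K i <#> Q i"
    "\<And>i q. i < n \<Longrightarrow> q \<in> Q i \<Longrightarrow> escapes (K i) (Q i) q u"
proof -
  obtain S where S: "\<And>i. i < n \<Longrightarrow> finite (S i) \<and> S i \<subseteq> carrier F \<and> K i = generate F (S i)"
    using K(2) unfolding finitely_generated_subgroup_def by metis
  define Q where "Q i = generator_prefixes (S i)" for i
  have Q: "finite (Q i)" "Q i \<subseteq> carrier F" if "i < n" for i
    using S[OF that] finite_generator_prefixes generator_prefixes_carrier by (auto simp: Q_def)
  have "finite (Sigma {..<n} Q)" using Q(1) by (intro finite_SigmaI) auto
  then obtain u where u: "word_over B u" "reduced_word u" "u \<noteq> []"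
    "\<forall>(i, q) \<in> Sigma {..<n} Q. escapes (K i) (Q i) q u"
    using exists_escaping_word[of "Sigma {..<n} Q" K Q, OF _ _ ab] K(1,3) Q by blast
  show ?thesis
  proof (rule that[OF u(1-3) Q(2)])
    show "word_eval F (take p (normal_form k)) \<in> K i <#> Q i" if "i < n" "k \<in> K i" for i k p
      using normal_form_prefix_mem_set_mult S[OF that(1)] that(2) by (simp add: Q_def)
    show "escapes (K i) (Q i) q u" if "i < n" "q \<in> Q i" for i q
      using u(4) that by blast
  qed
qed

end

section \<open>Framed words\<close>

definition framed :: "nat \<Rightarrow> nat \<Rightarrow> 'a list \<Rightarrow> 'a \<Rightarrow> 'a \<Rightarrow> bool" where
  "framed N M w c d \<longleftrightarrow> c \<noteq> d \<and>
     (\<exists>S. length S = M \<and> w = replicate N c @ [d] @ S @ [d] @ replicate N c)"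

lemma framed_length: "framed N M w c d \<Longrightarrow> length w = 2 * N + M + 2"
  by (auto simp: framed_def)

lemma framed_nth:
  assumes "framed N M w c d"
  shows "i < N \<Longrightarrow> w ! i = c" "w ! N = d" "w ! (N + M + 1) = d"
    "N + M + 2 \<le> i \<Longrightarrow> i < 2 * N + M + 2 \<Longrightarrow> w ! i = c"
  using assms by (auto simp: framed_def nth_append)

lemma framed_constant_window:
  assumes w: "framed N M w c d" and NM: "M + 2 < N"
    and s: "s + N \<le> length w" and window: "\<And>i. i < N \<Longrightarrow> w ! (s + i) = e"
  shows "e = c \<and> (s = 0 \<or> s = N + M + 2)"
proof -
  have cd: "c \<noteq> d" and len: "length w = 2 * N + M + 2"
    using w by (auto simp: framed_def)
  note nth = framed_nth[OF w]
  have "e = c"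
  proof (cases "s < N")
    case True
    then show ?thesis using window[of 0] nth(1)[of s] NM by simp
  next
    case False
    then show ?thesis using window[of "N - 1"] nth(4)[of "s + (N - 1)"] s len NM by simp
  qed
  moreover have "s = 0 \<or> s = N + M + 2"
  proof (rule ccontr)
    assume "\<not> ?thesis"
    then consider "0 < s" "s \<le> N" | "N < s" "s \<le> N + M + 1" using s len by linarith
    then show False
    proof cases
      case 1
      then show False using window[of "N - s"] nth(2) cd \<open>e = c\<close> by simp
    next
      case 2
      then show False using window[of "N + M + 1 - s"] nth(3) cd \<open>e = c\<close> NM by simp
    qed
  qed
  ultimately show ?thesis ..
qed

text \<open>Framed words form a comma-free code.\<close>

lemma framed_overlap:
  assumes u: "framed N M u c1 d1" and v: "framed N M v c2 d2" and w: "framed N M w c3 d3"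
    and NM: "M + 2 < N"
    and eq: "u @ v @ r = xs @ w @ ys" and short: "length xs < length u"
  shows "xs = []"
proof (rule ccontr)
  assume "xs \<noteq> []"
  define k where "k = length xs"
  have len: "length u = 2 * N + M + 2" "length v = 2 * N + M + 2" "length w = 2 * N + M + 2"
    using u v w by (simp_all add: framed_length)
  have at: "(u @ v @ r) ! (k + i) = w ! i" if "i < length w" for i
    using that by (simp add: eq k_def nth_append)
  have first: "u ! (k + i) = c3" if "k + N \<le> length u" "i < N" for i
    using at[of i] framed_nth(1)[OF w that(2)] that len by (simp add: k_def nth_append)
  have last: "v ! (k - N + i) = c3" if "N \<le> k" "i < N" for i
  proof -
    have idx: "k + (N + M + 2 + i) = length u + (k - N + i)" using that len by simp
    have "(u @ v @ r) ! (length u + (k - N + i)) = c3"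
      using at[of "N + M + 2 + i", unfolded idx] framed_nth(4)[OF w] that len by simp
    moreover have "k - N + i < length v" using that short len by (simp add: k_def)
    ultimately show ?thesis by (simp add: nth_append_length_plus nth_append)
  qed
  show False
  proof (cases "N \<le> k")
    case True
    have "k - N = 0 \<or> k - N = N + M + 2"
      using framed_constant_window[OF v NM _ last[OF True]] short len by (simp add: k_def)
    then have "k = N" using True short len by (auto simp: k_def)
    then show False
      using framed_constant_window[OF u NM _ first] len NM by simp
  next
    case False
    then show False
      using framed_constant_window[OF u NM _ first] \<open>xs \<noteq> []\<close> len by (simp add: k_def)
  qed
qed

lemma framed_occurrence_aligned:
  assumes ws: "\<forall>w \<in> set ws. \<exists>c d. framed N M w c d" and w: "framed N M w c d"
    and NM: "M + 2 < N" and eq: "concat ws = xs @ w @ ys"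
  shows "\<exists>q. xs = concat (take q ws)"
proof -
  define L where "L = 2 * N + M + 2"
  have lens: "\<forall>w \<in> set ws. length w = L" using ws by (auto simp: L_def framed_length)
  define q where "q = length xs div L"
  define k where "k = length xs mod L"
  have len_xs: "length xs = q * L + k" by (simp add: q_def k_def)
  have kL: "k < L" by (simp add: k_def L_def)
  have total: "length xs + L \<le> length ws * L"
    using arg_cong[OF eq, of length] length_concat_uniform[OF lens] w
    by (simp add: framed_length L_def)
  show ?thesis
  proof (cases "k = 0")
    case True
    then have "xs = take (q * L) (concat ws)" using len_xs eq by simp
    then show ?thesis using take_concat_uniform[OF lens] by auto
  next
    case False
    have "(q + 1) * L < length ws * L" using len_xs total False by simp
    then have "Suc q < length ws" by (simp only: mult_less_cancel2) simp
    then have split: "drop q ws = ws ! q # ws ! Suc q # drop (Suc (Suc q)) ws"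
      by (simp add: Cons_nth_drop_Suc)
    obtain c1 d1 c2 d2 where "framed N M (ws ! q) c1 d1" "framed N M (ws ! Suc q) c2 d2"
      using ws \<open>Suc q < length ws\<close> by (meson Suc_lessD nth_mem)
    moreover have "ws ! q @ ws ! Suc q @ concat (drop (Suc (Suc q)) ws) = drop (q * L) xs @ w @ ys"
      using arg_cong[OF eq, of "drop (q * L)"] drop_concat_uniform[OF lens, of q] split len_xs
      by simp
    moreover have "length (drop (q * L) xs) < length (ws ! q)"
      using len_xs kL lens \<open>Suc q < length ws\<close> by simp
    ultimately have "drop (q * L) xs = []"
      using framed_overlap[OF _ _ w NM] by blast
    then show ?thesis using len_xs False by simp
  qed
qed

section \<open>The test subgroup\<close>

locale test_words = free_group_basis +
  fixes a b :: 'a and u :: "('a \<times> bool) list"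
  assumes a: "a \<in> B" and b: "b \<in> B" and a_neq_b: "a \<noteq> b"
    and u: "word_over B u" "reduced_word u" "u \<noteq> []"
begin

definition run_length :: nat where "run_length = 2 * length u + 6"

definition core_length :: nat where "core_length = 2 * length u + 3"

definition pick_letter :: "'a \<times> bool \<Rightarrow> 'a \<times> bool \<Rightarrow> 'a \<times> bool" where
  "pick_letter x y = (SOME c. c \<in> {(a, True), (a, False), (b, True)} \<and> c \<noteq> x \<and> c \<noteq> y)"

lemma pick_letter: "fst (pick_letter x y) \<in> B" "pick_letter x y \<noteq> x" "pick_letter x y \<noteq> y"
proof -
  have "\<exists>c. c \<in> {(a, True), (a, False), (b, True)} \<and> c \<noteq> x \<and> c \<noteq> y"
    using a_neq_b by (cases "x = (a, True)"; cases "y = (a, True)"; auto)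
  then have "pick_letter x y \<in> {(a, True), (a, False), (b, True)} \<and> pick_letter x y \<noteq> x \<and>
      pick_letter x y \<noteq> y"
    unfolding pick_letter_def by (rule someI_ex)
  then show "fst (pick_letter x y) \<in> B" "pick_letter x y \<noteq> x" "pick_letter x y \<noteq> y"
    using a b by auto
qed

text \<open>The separating letters make \<open>core d\<close> reduced and prevent cancellation with \<open>d\<close> on
  either side; \<open>u\<close> occurs in \<open>core d\<close> and in its inverse at the same position.\<close>

definition core :: "'a \<times> bool \<Rightarrow> ('a \<times> bool) list" where
  "core d = [pick_letter (inv_letter d) (inv_letter (hd u))] @ u @
     [pick_letter (inv_letter (last u)) (last u)] @ inv_word u @ [pick_letter (hd u) (inv_letter d)]"

definition frame :: "'a \<times> bool \<Rightarrow> 'a \<times> bool \<Rightarrow> ('a \<times> bool) list \<Rightarrow> ('a \<times> bool) list" where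
  "frame c d w = replicate run_length c @ [d] @ w @ [d] @ replicate run_length c"

lemma length_core: "length (core d) = core_length"
  by (simp add: core_def core_length_def)

lemma word_over_core: "word_over B (core d)"
  using u(1) pick_letter(1) by (simp add: core_def)

lemma reduced_word_core: "reduced_word (core d)"
  and hd_core: "hd (core d) \<noteq> inv_letter d"
  and last_core: "last (core d) \<noteq> inv_letter d"
proof -
  let ?c1 = "pick_letter (inv_letter d) (inv_letter (hd u))"
    and ?c2 = "pick_letter (inv_letter (last u)) (last u)"
    and ?c3 = "pick_letter (hd u) (inv_letter d)"
  have "reduced_word (inv_word u @ [?c3])"
    using u pick_letter(2) by (simp add: reduced_word_append last_inv_word)
  then have "reduced_word ([?c2] @ inv_word u @ [?c3])"
    using u pick_letter(3)[symmetric] by (simp add: reduced_word_Cons hd_inv_word)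
  then have "reduced_word (u @ [?c2] @ inv_word u @ [?c3])"
    using u pick_letter(2) by (simp add: reduced_word_append inv_letter_eq_swap)
  moreover have "hd u \<noteq> inv_letter ?c1" by (metis inv_letter_inv_letter pick_letter(3))
  ultimately show "reduced_word (core d)" using u(3) by (simp add: core_def reduced_word_Cons)
  show "hd (core d) \<noteq> inv_letter d" "last (core d) \<noteq> inv_letter d"
    using pick_letter(2,3) by (simp_all add: core_def)
qed

lemma hd_frame [simp]: "hd (frame c d w) = c"
  and last_frame [simp]: "last (frame c d w) = c"
  and frame_neq_Nil [simp]: "frame c d w \<noteq> []"
  by (simp_all add: frame_def run_length_def)

lemma inv_word_frame: "inv_word (frame c d w) = frame (inv_letter c) (inv_letter d) (inv_word w)"
  by (simp add: frame_def inv_word_Cons)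

lemma word_over_frame: "fst c \<in> B \<Longrightarrow> fst d \<in> B \<Longrightarrow> word_over B w \<Longrightarrow> word_over B (frame c d w)"
  by (simp add: frame_def)

lemma framed_frame:
  "c \<noteq> d \<Longrightarrow> length w = core_length \<Longrightarrow> framed run_length core_length (frame c d w) c d"
  by (auto simp: framed_def frame_def)

lemma reduced_word_frame:
  assumes "reduced_word w" "w \<noteq> []" "hd w \<noteq> inv_letter d" "last w \<noteq> inv_letter d"
    and "fst c \<noteq> fst d"
  shows "reduced_word (frame c d w)"
proof -
  have cd: "d \<noteq> inv_letter c" "c \<noteq> inv_letter d" using assms(5) by auto
  have "reduced_word ([d] @ replicate run_length c)"
    using cd by (simp add: reduced_word_Cons reduced_word_replicate run_length_def)
  then have "reduced_word (w @ [d] @ replicate run_length c)"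
    using assms(1-4) by (subst reduced_word_append) (auto simp: inv_letter_eq_swap)
  then have "reduced_word ([d] @ w @ [d] @ replicate run_length c)"
    using assms(2,3) by (simp add: reduced_word_Cons)
  then show ?thesis using cd
    by (simp add: frame_def reduced_word_append reduced_word_replicate run_length_def)
qed

lemma frame_contains_u:
  assumes "\<exists>z ys. w = z # u @ ys"
  shows "\<exists>xs ys'. length xs = run_length + 2 \<and> frame c d w = xs @ u @ ys'"
proof -
  obtain z ys where "w = z # u @ ys" using assms by blast
  then show ?thesis
    by (intro exI[of _ "replicate run_length c @ [d, z]"] exI[of _ "ys @ [d] @ replicate run_length c"])
      (simp add: frame_def)
qed

definition word_x :: "('a \<times> bool) list" where
  "word_x = frame (a, True) (b, True) (core (b, True))"

definition word_y :: "('a \<times> bool) list" where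
  "word_y = frame (b, True) (a, True) (core (a, True))"

definition gen_x :: 'a where "gen_x = word_eval F word_x"

definition gen_y :: 'a where "gen_y = word_eval F word_y"

definition test_subgroup :: "'a set" where "test_subgroup = generate F {gen_x, gen_y}"

lemma framed_test_words:
  "framed run_length core_length word_x (a, True) (b, True)"
  "framed run_length core_length word_y (b, True) (a, True)"
  "framed run_length core_length (inv_word word_x) (a, False) (b, False)"
  "framed run_length core_length (inv_word word_y) (b, False) (a, False)"
  using a_neq_b
  by (simp_all add: word_x_def word_y_def inv_word_frame inv_letter_def framed_frame length_core)

lemma test_word_props:
  assumes "W \<in> {word_x, word_y}"
  shows "word_over B W" "reduced_word W" "\<exists>c d. framed run_length core_length W c d"
    "\<exists>c d. framed run_length core_length (inv_word W) c d"
    "\<exists>xs ys. length xs = run_length + 2 \<and> W = xs @ u @ ys"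
    "\<exists>xs ys. length xs = run_length + 2 \<and> inv_word W = xs @ u @ ys"
proof -
  have core: "\<exists>z ys. core d = z # u @ ys" "\<exists>z ys. inv_word (core d) = z # u @ ys" for d
    by (auto simp: core_def inv_word_Cons)
  show "word_over B W" "reduced_word W"
    using assms a b a_neq_b word_over_core reduced_word_core hd_core last_core
    by (auto simp: word_x_def word_y_def intro!: word_over_frame reduced_word_frame)
      (auto simp: core_def)
  show "\<exists>c d. framed run_length core_length W c d"
    "\<exists>c d. framed run_length core_length (inv_word W) c d"
    using assms framed_test_words by auto
  show "\<exists>xs ys. length xs = run_length + 2 \<and> W = xs @ u @ ys"
    "\<exists>xs ys. length xs = run_length + 2 \<and> inv_word W = xs @ u @ ys"
    using assms frame_contains_u[OF core(1)] frame_contains_u[OF core(2)]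
    by (auto simp: word_x_def word_y_def inv_word_frame inv_letter_def)
qed

lemma normal_form_gen: "normal_form gen_x = word_x" "normal_form gen_y = word_y"
  using test_word_props(1,2) by (simp_all add: gen_x_def gen_y_def normal_form_word_eval)

lemma gen_x_neq_gen_y: "gen_x \<noteq> gen_y"
proof
  assume "gen_x = gen_y"
  then have "hd word_x = hd word_y" using normal_form_gen by metis
  then show False using a_neq_b by (simp add: word_x_def word_y_def)
qed

lemma gens_carrier: "{gen_x, gen_y} \<subseteq> carrier F"
  using test_word_props(1) by (simp add: gen_x_def gen_y_def)

definition block :: "'a \<times> bool \<Rightarrow> ('a \<times> bool) list" where
  "block l = (if snd l then id else inv_word) (if fst l = gen_x then word_x else word_y)"

definition block_letter :: "'a \<times> bool \<Rightarrow> 'a \<times> bool" where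
  "block_letter l = (if fst l = gen_x then a else b, snd l)"

lemma block:
  assumes "fst l \<in> {gen_x, gen_y}"
  shows "word_over B (block l)" "reduced_word (block l)" "block l \<noteq> []"
    "hd (block l) = block_letter l" "last (block l) = block_letter l"
    "\<exists>c d. framed run_length core_length (block l) c d"
    "\<exists>xs ys. length xs = run_length + 2 \<and> block l = xs @ u @ ys"
    "word_eval F (block l) = letter_eval F l"
proof -
  have W: "(if fst l = gen_x then word_x else word_y) \<in> {word_x, word_y}" by simp
  show "word_over B (block l)" "reduced_word (block l)"
    "\<exists>c d. framed run_length core_length (block l) c d"
    "\<exists>xs ys. length xs = run_length + 2 \<and> block l = xs @ u @ ys"
    using test_word_props[OF W] by (simp_all add: block_def)
  show "block l \<noteq> []" "hd (block l) = block_letter l" "last (block l) = block_letter l"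
    using assms gen_x_neq_gen_y
    by (auto simp: block_def block_letter_def word_x_def word_y_def inv_word_frame inv_letter_def)
  show "word_eval F (block l) = letter_eval F l"
    using assms gen_x_neq_gen_y test_word_props(1)
    by (auto simp: block_def letter_eval_def word_eval_inv_word basis_word_carrier
        gen_x_def[symmetric] gen_y_def[symmetric])
qed

lemma block_letter_adjacent:
  assumes "fst l \<in> {gen_x, gen_y}" "fst m \<in> {gen_x, gen_y}" "m \<noteq> inv_letter l"
  shows "block_letter m \<noteq> inv_letter (block_letter l)"
  using assms a_neq_b gen_x_neq_gen_y
  by (cases l; cases m) (auto simp: block_letter_def inv_letter_def)

lemma word_over_concat_block:
  "word_over {gen_x, gen_y} w \<Longrightarrow> word_over B (concat (map block w))"
  by (induction w) (simp_all add: block)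

lemma word_eval_concat_block:
  "word_over {gen_x, gen_y} w \<Longrightarrow> word_eval F (concat (map block w)) = word_eval F w"
  by (induction w)
    (simp_all add: block word_eval_append word_eval_Cons basis_word_carrier word_over_concat_block)

lemma reduced_word_concat_block:
  "word_over {gen_x, gen_y} w \<Longrightarrow> reduced_word w \<Longrightarrow> reduced_word (concat (map block w))"
proof (induction w)
  case (Cons l w)
  then have IH: "reduced_word (concat (map block w))" by (simp add: reduced_word_Cons)
  show ?case
  proof (cases w)
    case Nil
    then show ?thesis using Cons.prems block(2) by simp
  next
    case (Cons m w')
    then have "hd (concat (map block w)) = block_letter m" using \<open>word_over _ (l # w)\<close> block
      by simp
    moreover have "block_letter m \<noteq> inv_letter (block_letter l)"
      using Cons.prems Cons block_letter_adjacent by (simp add: reduced_word_Cons)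
    ultimately show ?thesis using IH Cons.prems block[of l]
      by (simp add: reduced_word_append)
  qed
qed simp

lemma test_subgroup_subgroup: "subgroup test_subgroup F"
  unfolding test_subgroup_def using gens_carrier by (rule generate_is_subgroup)

lemma word_eval_gens_mem [simp]:
  "word_over {gen_x, gen_y} w \<Longrightarrow> word_eval F w \<in> test_subgroup"
  "word_over {gen_x, gen_y} w \<Longrightarrow> word_eval F w \<in> carrier F"
  using word_eval_mem_generate word_eval_closed word_over_mono[OF _ gens_carrier]
  by (auto simp: test_subgroup_def)

lemma normal_form_test_subgroup:
  assumes "h \<in> test_subgroup"
  shows "\<exists>\<nu>. word_over {gen_x, gen_y} \<nu> \<and> normal_form h = concat (map block \<nu>)"
proof -
  obtain \<nu> where \<nu>: "word_over {gen_x, gen_y} \<nu>" "reduced_word \<nu>" "word_eval F \<nu> = h"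
    using exists_reduced_word assms gens_carrier unfolding test_subgroup_def by blast
  then have "normal_form h = concat (map block \<nu>)"
    using normal_form_word_eval[OF word_over_concat_block reduced_word_concat_block]
      word_eval_concat_block by metis
  then show ?thesis using \<nu>(1) by blast
qed

lemma free_rank_2_test_subgroup: "free_rank_2_subgroup F test_subgroup"
proof -
  let ?H = "F\<lparr>carrier := test_subgroup\<rparr>"
  have sub: "{gen_x, gen_y} \<subseteq> test_subgroup"
    unfolding test_subgroup_def by (auto intro: generate.incl)
  have "generate ?H {gen_x, gen_y} = test_subgroup"
    using generate_consistent[OF sub test_subgroup_subgroup] by (simp add: test_subgroup_def)
  moreover have "word_eval ?H w \<noteq> \<one>\<^bsub>?H\<^esub>"
    if "set (map fst w) \<subseteq> {gen_x, gen_y}" "w \<noteq> []" "reduced_word w" for w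
  proof -
    have w: "word_over {gen_x, gen_y} w" using that(1) by (simp add: word_over_def)
    have "concat (map block w) \<noteq> []" using that(2) block(3) w by (cases w) auto
    then have "word_eval F (concat (map block w)) \<noteq> \<one>"
      using word_eval_reduced_neq_one word_over_concat_block[OF w]
        reduced_word_concat_block[OF w that(3)] by blast
    then show ?thesis
      using word_eval_consistent[OF test_subgroup_subgroup word_over_mono[OF w sub]]
        word_eval_concat_block[OF w] by simp
  qed
  ultimately have "free_basis ?H {gen_x, gen_y}" using sub by (simp add: free_basis_def)
  then show ?thesis
    using test_subgroup_subgroup gen_x_neq_gen_y by (auto simp: free_rank_2_subgroup_def)
qed

lemma nontrivial_test_element_cyclically_reduced:
  assumes "h \<in> test_subgroup" "h \<noteq> \<one>"
  shows "\<exists>t \<in> test_subgroup. \<exists>w. word_over {gen_x, gen_y} w \<and> reduced_word w \<and> w \<noteq> [] \<and>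
    hd w \<noteq> inv_letter (last w) \<and> h = t \<otimes> word_eval F w \<otimes> inv t"
proof -
  obtain w where "word_over {gen_x, gen_y} w" "reduced_word w" "word_eval F w = h"
    using exists_reduced_word assms(1) gens_carrier unfolding test_subgroup_def by blast
  moreover have "w \<noteq> []" using calculation assms(2) by auto
  ultimately show ?thesis
    using exists_cyclically_reduced_conjugate[OF gens_carrier] unfolding test_subgroup_def by blast
qed

lemma conjugate_power_contains_block:
  assumes w: "word_over {gen_x, gen_y} w" "reduced_word w" "w \<noteq> []" "hd w \<noteq> inv_letter (last w)"
    and z: "z \<in> carrier F"
  shows "\<exists>(m::nat) (k::nat) xs ys.
    normal_form (z \<otimes> word_eval F w [^] m \<otimes> inv z) = xs @ block (hd w) @ ys \<and>
    word_eval F xs = z \<otimes> word_eval F w [^] k"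
proof -
  define n where "n = length (normal_form z)"
  define R where "R = concat (map block w)"
  obtain R' where R': "R = block (hd w) @ R'" using w(3) by (cases w) (simp_all add: R_def)
  have R: "word_over B R" "word_eval F R = word_eval F w"
    using w(1) by (simp_all add: R_def word_over_concat_block word_eval_concat_block)
  have "1 \<le> length R" using block(3)[OF word_over_hd[OF w(1,3)]] by (simp add: R' Suc_le_eq)
  then have len: "k \<le> length (concat (replicate k R))" for k by (induction k) auto
  \<comment> \<open>At most \<open>n\<close> letters cancel against \<open>z\<close> on either side, so the block opening
    copy \<open>n + 1\<close> of \<open>R\<close> survives in the normal form.\<close>
  define Rm where "Rm = concat (replicate n R) @ block (hd w) @ (R' @ concat (replicate (Suc n) R))"
  have "2 * n + 2 = n + Suc (Suc n)" by simp
  then have Rm: "Rm = concat (replicate (2 * n + 2) R)"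
    unfolding Rm_def by (simp only: replicate_add) (simp add: R')
  also have "\<dots> = concat (map block (concat (replicate (2 * n + 2) w)))"
    by (simp only: R_def concat_map_concat_replicate)
  finally have red: "reduced_word Rm"
    using reduced_word_concat_block[OF word_over_concat_replicate[OF w(1)]
        reduced_word_concat_replicate[OF w(2-4)]] by (simp only:)
  have over: "word_over B Rm" using R(1) by (simp add: Rm word_over_concat_replicate)
  have val: "word_eval F Rm = word_eval F w [^] (2 * n + 2)"
    unfolding Rm by (simp only: word_eval_concat_replicate[OF basis_word_carrier[OF R(1)]] R(2))
  have "length (normal_form z) \<le> length (concat (replicate n R))"
    "length (normal_form z) \<le> length (R' @ concat (replicate (Suc n) R))"
    using len[of n] len[of "Suc n"] by (simp_all add: n_def)
  then obtain xs ys where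
    "normal_form (z \<otimes> word_eval F Rm \<otimes> inv z) = xs @ block (hd w) @ ys"
    "word_eval F xs = z \<otimes> word_eval F (concat (replicate n R))"
    using normal_form_conjugate_contains[OF z over[unfolded Rm_def] red[unfolded Rm_def]]
    unfolding Rm_def by blast
  moreover have "word_eval F (concat (replicate n R)) = word_eval F w [^] n"
    using R by (simp add: word_eval_concat_replicate basis_word_carrier)
  ultimately show ?thesis using val by metis
qed

lemma power_of_conjugate_contains_block:
  assumes h: "h \<in> test_subgroup" "h \<noteq> \<one>" and g: "g \<in> carrier F"
  shows "\<exists>(m::nat) l xs ys. fst l \<in> {gen_x, gen_y} \<and>
    normal_form ((g \<otimes> h \<otimes> inv g) [^] m) = xs @ block l @ ys \<and>
    (\<exists>t \<in> test_subgroup. word_eval F xs = g \<otimes> t)"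
proof -
  obtain t w where t: "t \<in> test_subgroup" and w: "word_over {gen_x, gen_y} w" "reduced_word w"
    "w \<noteq> []" "hd w \<noteq> inv_letter (last w)" and h_eq: "h = t \<otimes> word_eval F w \<otimes> inv t"
    using nontrivial_test_element_cyclically_reduced[OF h] by blast
  note sub = test_subgroup_subgroup
  have carr: "t \<in> carrier F" "word_eval F w \<in> carrier F"
    using t w(1) subgroup.mem_carrier[OF sub] by auto
  define z where "z = g \<otimes> t"
  have z: "z \<in> carrier F" using g carr by (simp add: z_def)
  have "g \<otimes> h \<otimes> inv g = z \<otimes> word_eval F w \<otimes> inv z"
    using g carr h_eq by (simp add: z_def m_assoc inv_mult_group)
  then have pow: "(g \<otimes> h \<otimes> inv g) [^] m = z \<otimes> word_eval F w [^] m \<otimes> inv z" for m :: nat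
    using conj_nat_pow[OF z carr(2)] by simp
  obtain m k :: nat and xs ys where
    "normal_form (z \<otimes> word_eval F w [^] m \<otimes> inv z) = xs @ block (hd w) @ ys"
    and xs: "word_eval F xs = z \<otimes> word_eval F w [^] k"
    using conjugate_power_contains_block[OF w z] by blast
  moreover have "word_eval F xs = g \<otimes> (t \<otimes> word_eval F w [^] k)"
    using xs g carr by (simp add: z_def m_assoc)
  moreover have "t \<otimes> word_eval F w [^] k \<in> test_subgroup"
    using t w(1) sub by (simp add: subgroup.m_closed subgroup_nat_pow_closed)
  ultimately show ?thesis using word_over_hd[OF w(1,3)] pow by metis
qed

lemma test_subgroup_not_conjugate:
  assumes K: "subgroup K F" and Q: "Q \<subseteq> carrier F"
    and prefixes: "\<And>k p. k \<in> K \<Longrightarrow> word_eval F (take p (normal_form k)) \<in> K <#> Q"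
    and escape: "\<And>q. q \<in> Q \<Longrightarrow> escapes K Q q u"
    and h: "h \<in> test_subgroup" "h \<noteq> \<one>" and g: "g \<in> carrier F" and k: "k \<in> K"
  shows "h \<noteq> g \<otimes> k \<otimes> inv g"
proof
  assume conj: "h = g \<otimes> k \<otimes> inv g"
  obtain m :: nat and l xs ys where l: "fst l \<in> {gen_x, gen_y}"
    and W: "normal_form ((inv g \<otimes> h \<otimes> inv (inv g)) [^] m) = xs @ block l @ ys"
    using power_of_conjugate_contains_block[OF h inv_closed[OF g]] by blast
  have "inv g \<otimes> h \<otimes> inv (inv g) = k"
    using conj g k subgroup.mem_carrier[OF K] by (simp add: m_assoc)
  then have in_K: "(inv g \<otimes> h \<otimes> inv (inv g)) [^] m \<in> K"
    using K k by (simp add: subgroup_nat_pow_closed)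
  obtain zs ys' where "block l = zs @ u @ ys'" using block(7)[OF l] by blast
  then have "normal_form ((inv g \<otimes> h \<otimes> inv (inv g)) [^] m) = (xs @ zs) @ u @ (ys' @ ys)"
    using W by simp
  then obtain q where "q \<in> Q" "\<not> escapes K Q q u"
    using subword_of_normal_form_not_escapes[OF K Q prefixes[OF in_K]] in_K subgroup.mem_carrier[OF K]
    by blast
  then show False using escape by blast
qed

lemma test_subgroup_conjugate_trivial:
  assumes g: "g \<in> carrier F" "g \<notin> test_subgroup" and h: "h \<in> test_subgroup"
    and gh: "g \<otimes> h \<otimes> inv g \<in> test_subgroup"
  shows "h = \<one>"
proof (rule ccontr)
  assume "h \<noteq> \<one>"
  note sub = test_subgroup_subgroup
  obtain m :: nat and l xs ys t where l: "fst l \<in> {gen_x, gen_y}"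
    and W: "normal_form ((g \<otimes> h \<otimes> inv g) [^] m) = xs @ block l @ ys"
    and t: "t \<in> test_subgroup" "word_eval F xs = g \<otimes> t"
    using power_of_conjugate_contains_block[OF h \<open>h \<noteq> \<one>\<close> g(1)] by blast
  obtain \<nu> where \<nu>: "word_over {gen_x, gen_y} \<nu>"
    "normal_form ((g \<otimes> h \<otimes> inv g) [^] m) = concat (map block \<nu>)"
    using normal_form_test_subgroup subgroup_nat_pow_closed[OF sub gh] by blast
  have "\<forall>v \<in> set (map block \<nu>). \<exists>c d. framed run_length core_length v c d"
    using \<nu>(1) block(6) by (auto simp: word_over_def)
  moreover obtain c d where "framed run_length core_length (block l) c d"
    using block(6)[OF l] by blast
  moreover have "core_length + 2 < run_length" by (simp add: core_length_def run_length_def)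
  ultimately obtain q where "xs = concat (take q (map block \<nu>))"
    using framed_occurrence_aligned W \<nu>(2) by metis
  moreover have "word_over {gen_x, gen_y} (take q \<nu>)" using \<nu>(1) by (rule word_over_take)
  ultimately have "word_eval F xs \<in> test_subgroup" by (simp add: take_map word_eval_concat_block)
  then have "g \<otimes> t \<in> test_subgroup" using t(2) by simp
  then have "g \<otimes> t \<otimes> inv t \<in> test_subgroup"
    using t(1) sub by (simp add: subgroup.m_closed subgroup.m_inv_closed)
  then show False using g t(1) subgroup.mem_carrier[OF sub] by (simp add: m_assoc)
qed

lemma test_subgroup_malnormal: "malnormal F test_subgroup"
  unfolding malnormal_def
proof (intro ballI equalityI subsetI)
  fix g x assume g: "g \<in> carrier F - test_subgroup"
    and "x \<in> {g \<otimes> h \<otimes> inv g |h. h \<in> test_subgroup} \<inter> test_subgroup"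
  then obtain h where h: "h \<in> test_subgroup" "x = g \<otimes> h \<otimes> inv g" "x \<in> test_subgroup" by blast
  then have "h = \<one>" using test_subgroup_conjugate_trivial g by blast
  then show "x \<in> {\<one>}" using h g by simp
next
  fix g x assume "g \<in> carrier F - test_subgroup" "x \<in> {\<one>}"
  then show "x \<in> {g \<otimes> h \<otimes> inv g |h. h \<in> test_subgroup} \<inter> test_subgroup"
    using subgroup.one_closed[OF test_subgroup_subgroup] by force
qed

end

context free_group_basis
begin

lemma exists_malnormal_avoiding_subgroup:
  fixes K :: "nat \<Rightarrow> 'a set" and n :: nat
  assumes K: "\<And>i. i < n \<Longrightarrow> subgroup (K i) F" "\<And>i. i < n \<Longrightarrow> finitely_generated_subgroup F (K i)"
    "\<And>i. i < n \<Longrightarrow> infinite (rcosets (K i))"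
    and ab: "a \<in> B" "b \<in> B" "a \<noteq> b"
  shows "\<exists>H. free_rank_2_subgroup F H \<and> malnormal F H \<and>
    (\<forall>h \<in> H. h \<noteq> \<one> \<longrightarrow> \<not> (\<exists>g \<in> carrier F. \<exists>i < n. \<exists>k \<in> K i. h = g \<otimes> k \<otimes> inv g))"
proof (rule exists_test_word[OF K ab])
  fix u Q
  assume u: "word_over B u" "reduced_word u" "u \<noteq> []"
    and Q: "\<And>i. i < n \<Longrightarrow> Q i \<subseteq> carrier F"
    and prefixes: "\<And>i k p. i < n \<Longrightarrow> k \<in> K i \<Longrightarrow> word_eval F (take p (normal_form k)) \<in> K i <#> Q i"
    and escape: "\<And>i q. i < n \<Longrightarrow> q \<in> Q i \<Longrightarrow> escapes (K i) (Q i) q u"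
  interpret test_words F B a b u using ab u by unfold_locales
  have "h \<noteq> g \<otimes> k \<otimes> inv g"
    if "h \<in> test_subgroup" "h \<noteq> \<one>" "g \<in> carrier F" "i < n" "k \<in> K i" for h g i k
    using test_subgroup_not_conjugate[OF K(1) Q prefixes escape] that by blast
  then show ?thesis using free_rank_2_test_subgroup test_subgroup_malnormal by blast
qed

end

lemma two_distinct_elements:
  assumes "infinite A \<or> card A \<ge> 2"
  obtains a b where "a \<in> A" "b \<in> A" "a \<noteq> b"
proof -
  have "A \<noteq> {} \<and> (\<forall>x. A \<noteq> {x})" using assms by auto
  then show ?thesis using that by blast
qed

theorem mainTheorem9:
  fixes F :: "('a, 'b) monoid_scheme" and K :: "nat \<Rightarrow> 'a set" and n :: nat
  assumes "free_group_rank_ge_2 F"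
    and "\<And>i. i < n \<Longrightarrow> subgroup (K i) F"
    and "\<And>i. i < n \<Longrightarrow> finitely_generated_subgroup F (K i)"
    and "\<And>i. i < n \<Longrightarrow> infinite (rcosets\<^bsub>F\<^esub> (K i))"
  shows "\<exists>H. free_rank_2_subgroup F H \<and> malnormal F H \<and>
           (\<forall>h \<in> H. h \<noteq> \<one>\<^bsub>F\<^esub> \<longrightarrow>
              \<not> (\<exists>g \<in> carrier F. \<exists>i < n. \<exists>k \<in> K i. h = g \<otimes>\<^bsub>F\<^esub> k \<otimes>\<^bsub>F\<^esub> inv\<^bsub>F\<^esub> g))"
proof -
  obtain B where "group F" "free_basis F B" and rank: "infinite B \<or> card B \<ge> 2"
    using assms(1) unfolding free_group_rank_ge_2_def by blast
  then interpret free_group_basis F B by (simp add: free_group_basis_def free_group_basis_axioms_def)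
  obtain a b where ab: "a \<in> B" "b \<in> B" "a \<noteq> b" using rank by (rule two_distinct_elements)
  show ?thesis using exists_malnormal_avoiding_subgroup[OF assms(2-4) ab] .
qed

end
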